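(* Let $p\ge3$ be a prime and $d\in D_p$. (1) If $p=3$, then (a) $\binom{2d}{d}_{\#3}=\binom{3d}{d}_{\#3}$; (b) $\binom{2d+1}{d}_{\#3}=\binom{3d+2}{d}_{\#3}$; and for all integers $a$ with $0\le a\le 2d$: (c) $\big(\binom ad\binom{3d-a}{d}\big)_{\#3}\ge\binom{2d}{d}_{\#3}$; (d) $\big(\binom ad\binom{3d-1-a}{d}\big)_{\#3}\ge\binom{2d}{d}_{\#3}$; (e) $\big(\binom ad\binom{3d+1-a}{d+1}\big)_{\#3}\ge\binom{2d+1}{d}_{\#3}$. (2) If $p\ge5$, then (a) $\binom{2d}{d}_{\#p}=\binom{3d}{d}_{\#p}$; and for all integers $a$ with $0\le a\le 2d$: (b) $\big(\binom ad\binom{3d-a}{d}\big)_{\#p}\ge\binom{2d}d_{\#p}$; (c) $\big(\binom ad\binom{3d-1-a}{d}\big)_{\#p}\ge\binom{2d}d_{\#p}$; (d) $\big(\binom a{d-1}\binom{3d-2-a}{d}\big)_{\#p}\ge\binom{2d}d_{\#p}$.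
   Context: For an integer $M$ and prime $p$, $M_{\#p}=\sup\{k: p^k\mid M\}$ (so $0_{\#p}=\infty$); $\binom{m}{i}_{\#p}$ means $(\binom mi)_{\#p}$. For integers $m,i$: $\binom mi=\frac{m(m-1)\cdots(m-i+1)}{i!}$ if $i>0$, $1$ if $i=0$, $0$ if $i<0$. Sets $D_p$: $D_3$ is the smallest set of non-negative integers containing $0$ such that $d\in D_3$ implies $3d,3d+2\in D_3$. For a prime $p\ge5$, let $\pi_p$ be the largest integer with $\pi_p<p/3$; $D_p$ is the smallest set of non-negative integers containing $[0,\pi_p]\cap\mathbb Z$ such that for each $d\in D_p$, every non-negative integer in $[pd-\pi_p,pd+\pi_p]$ lies in $D_p$. *)

theory Defs
  imports "HOL-Computational_Algebra.Computational_Algebra" "HOL-Library.Extended_Nat"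
begin

definition ibinom :: "int \<Rightarrow> int \<Rightarrow> int" where
  "ibinom m i = (if i < 0 then 0
                 else (\<Prod>j<nat i. (m - int j)) div fact (nat i))"

definition vp :: "nat \<Rightarrow> int \<Rightarrow> enat" where
  "vp p M = (if M = 0 then \<infinity> else enat (multiplicity (int p) M))"

inductive_set D3 :: "nat set" where
  D3_zero: "0 \<in> D3"
| D3_mult: "d \<in> D3 \<Longrightarrow> 3 * d \<in> D3"
| D3_plus2: "d \<in> D3 \<Longrightarrow> 3 * d + 2 \<in> D3"

text \<open>pi_p = largest integer strictly less than p/3.\<close>
definition pip :: "nat \<Rightarrow> int" where
  "pip p = (int p - 1) div 3"

inductive_set Dgen :: "nat \<Rightarrow> nat set" for p :: nat where
  Dgen_base: "int d \<le> pip p \<Longrightarrow> d \<in> Dgen p"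
| Dgen_step: "d \<in> Dgen p \<Longrightarrow> int p * int d - pip p \<le> int e \<Longrightarrow>
              int e \<le> int p * int d + pip p \<Longrightarrow> e \<in> Dgen p"

definition Dp :: "nat \<Rightarrow> nat set" where
  "Dp p = (if p = 3 then D3 else Dgen p)"

end

theory Submission
  imports Defs
begin

(* By Kummer's theorem the p-adic valuation of (m choose n) counts
   the levels k at which m mod p^k < n mod p^k, i.e. the carries when n and m - n
   are added in base p.  Every claim of the theorem compares such carry counts,
   and we compare them level by level: writing q = p^k and r = d mod q, the
   binomial (2d choose d) carries at level q iff 2r >= q.  Elements of D_p have
   residues r avoiding the middle third of [0, q), so such a carry puts r into
   the upper third, and a short window computation of residues mod q then shows
   that the binomials on the other side carry at the same level.
   The file proceeds in four steps: (1) Legendre's and Kummer's formulas, recast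
   as a comparison principle for vp of ibinom; (2) the level-wise carry lemmas
   about residues modulo q; (3) the residue gap properties of D_3 and of D_p for
   p >= 5; (4) the individual statements for general x, from which theorem1p9
   follows by instantiation. *)

lemma multiplicity_eq_card_dvd_powers:
  fixes p m N :: nat
  assumes p: "prime p" and m: "0 < m" "m \<le> N"
  shows "multiplicity p m = card {k\<in>{1..N}. p ^ k dvd m}"
proof -
  define j where "j = multiplicity p m"
  have dvd_iff: "p ^ k dvd m \<longleftrightarrow> k \<le> j" for k
    unfolding j_def using m p by (intro power_dvd_iff_le_multiplicity) (auto simp: not_prime_unit)
  have "j < 2 ^ j"
    by (rule less_exp)
  also have "(2::nat) ^ j \<le> p ^ j"
    using prime_ge_2_nat[OF p] by (rule power_mono) simp
  also have "p ^ j \<le> m"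
    using dvd_iff m by (simp add: dvd_imp_le)
  finally have "{k\<in>{1..N}. p ^ k dvd m} = {1..j}"
    using m by (auto simp: dvd_iff)
  then show ?thesis
    unfolding j_def by simp
qed

lemma div_add_carry:
  fixes a b q :: nat
  assumes q: "0 < q"
  shows "(a + b) div q = a div q + b div q + (if (a + b) mod q < a mod q then 1 else 0)"
proof -
  have a: "a mod q < q" and b: "b mod q < q"
    using q by simp_all
  have sum_mod: "(a + b) mod q = (a mod q + b mod q) mod q"
    by (simp add: mod_add_eq)
  have "(a mod q + b mod q) div q = (if (a + b) mod q < a mod q then 1 else 0)"
  proof (cases "a mod q + b mod q < q")
    case True
    then have "(a + b) mod q = a mod q + b mod q"
      unfolding sum_mod by simp
    then show ?thesis
      using True by simp
  next
    case False
    moreover have "a mod q + b mod q - q < q"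
      using a b by linarith
    ultimately have "(a mod q + b mod q) mod q = a mod q + b mod q - q"
      "(a mod q + b mod q) div q = 1"
      using a b by (simp_all add: le_mod_geq le_div_geq)
    then show ?thesis
      using b False unfolding sum_mod by simp
  qed
  then show ?thesis
    unfolding div_add1_eq[of a b q] by simp
qed

lemma legendre_formula:
  fixes p n N :: nat
  assumes p: "prime p" and n: "n \<le> N"
  shows "multiplicity p (fact n) = (\<Sum>k\<in>{1..N}. n div p ^ k)"
  using n
proof (induction n)
  case 0
  then show ?case by simp
next
  case (Suc n)
  have "multiplicity p (fact (Suc n) :: nat) = multiplicity p (Suc n * fact n)"
    by simp
  also have "\<dots> = multiplicity p (Suc n) + multiplicity p (fact n :: nat)"
    using p by (intro prime_elem_multiplicity_mult_distrib) auto
  also have "multiplicity p (Suc n) = (\<Sum>k\<in>{1..N}. if p ^ k dvd Suc n then 1 else 0)"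
    using p Suc.prems by (simp add: multiplicity_eq_card_dvd_powers sum.If_cases Int_def conj_commute)
  also have "multiplicity p (fact n :: nat) = (\<Sum>k\<in>{1..N}. n div p ^ k)"
    using Suc by simp
  also have "(\<Sum>k\<in>{1..N}. if p ^ k dvd Suc n then 1 else 0) + (\<Sum>k\<in>{1..N}. n div p ^ k)
      = (\<Sum>k\<in>{1..N}. Suc n div p ^ k)"
    unfolding sum.distrib[symmetric] by (rule sum.cong) (auto simp: div_Suc dvd_eq_mod_eq_0)
  finally show ?case .
qed

lemma kummer_carries:
  fixes p m n N :: nat
  assumes p: "prime p" and nm: "n \<le> m" and mN: "m \<le> N"
  shows "multiplicity p (m choose n) = card {k\<in>{1..N}. m mod p ^ k < n mod p ^ k}"
proof -
  let ?carry = "\<lambda>k. if m mod p ^ k < n mod p ^ k then 1 else 0 :: nat"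
  have nonzero: "(fact n :: nat) \<noteq> 0" "(fact (m - n) :: nat) \<noteq> 0" "m choose n \<noteq> 0"
    using nm by auto
  have "multiplicity p (fact m :: nat) = multiplicity p (fact n * fact (m - n) * (m choose n) :: nat)"
    using binomial_fact_lemma[OF nm] by simp
  also have "\<dots> = multiplicity p (fact n :: nat) + multiplicity p (fact (m - n) :: nat)
      + multiplicity p (m choose n)"
    using p nonzero by (simp add: prime_elem_multiplicity_mult_distrib)
  finally have fact_split: "multiplicity p (fact m :: nat) = multiplicity p (fact n :: nat)
      + multiplicity p (fact (m - n) :: nat) + multiplicity p (m choose n)" .
  have "m div p ^ k = n div p ^ k + (m - n) div p ^ k + ?carry k" for k
    using div_add_carry[of "p ^ k" n "m - n"] p nm by (simp add: prime_gt_0_nat)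
  then have "(\<Sum>k\<in>{1..N}. m div p ^ k)
      = (\<Sum>k\<in>{1..N}. n div p ^ k) + (\<Sum>k\<in>{1..N}. (m - n) div p ^ k) + (\<Sum>k\<in>{1..N}. ?carry k)"
    by (simp add: sum.distrib)
  moreover have "(\<Sum>k\<in>{1..N}. ?carry k) = card {k\<in>{1..N}. m mod p ^ k < n mod p ^ k}"
    by (simp add: sum.If_cases Int_def conj_commute)
  moreover have "multiplicity p (fact m :: nat) = (\<Sum>k\<in>{1..N}. m div p ^ k)"
    by (rule legendre_formula[OF p mN])
  moreover have "multiplicity p (fact n :: nat) = (\<Sum>k\<in>{1..N}. n div p ^ k)"
    by (rule legendre_formula[OF p]) (use nm mN in linarith)
  moreover have "multiplicity p (fact (m - n) :: nat) = (\<Sum>k\<in>{1..N}. (m - n) div p ^ k)"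
    by (rule legendre_formula[OF p]) (use mN in linarith)
  ultimately show ?thesis
    using fact_split by linarith
qed

lemma ibinom_of_nat: "ibinom (int m) (int n) = int (m choose n)"
proof -
  have "real_of_int (\<Prod>j<n. int m - int j) = (\<Prod>j\<in>{0..<n}. real m - of_nat j)"
    by (simp add: atLeast0LessThan)
  also have "\<dots> = real (m choose n) * fact n"
    by (simp add: gbinomial_mult_fact'[symmetric] binomial_gbinomial)
  finally have "(\<Prod>j<n. int m - int j) = int (m choose n) * fact n"
    by (metis of_int_eq_iff of_int_fact of_int_mult of_int_of_nat_eq)
  then show ?thesis
    unfolding ibinom_def by simp
qed

lemma multiplicity_of_nat:
  fixes p x :: nat
  assumes p: "prime p" and x: "x \<noteq> 0"
  shows "multiplicity (int p) (int x) = multiplicity p x"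
proof (rule multiplicity_eqI)
  have "p ^ multiplicity p x dvd x" and "\<not> p ^ Suc (multiplicity p x) dvd x"
    using prime_gt_1_nat[OF p] x multiplicity_dvd[of p x]
      power_dvd_iff_le_multiplicity[where p = p and x = x and n = "Suc (multiplicity p x)"]
    by auto
  then show "int p ^ multiplicity p x dvd int x" and "\<not> int p ^ Suc (multiplicity p x) dvd int x"
    by (metis of_nat_dvd_iff of_nat_power)+
qed

lemma vp_mult:
  assumes "prime p"
  shows "vp p (x * y) = vp p x + vp p y"
  using assms by (simp add: vp_def prime_elem_multiplicity_mult_distrib)

definition carries :: "nat \<Rightarrow> nat \<Rightarrow> int \<Rightarrow> int \<Rightarrow> nat set" where
  "carries p N m n = {k\<in>{1..N}. m mod int p ^ k < n mod int p ^ k}"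

lemma finite_carries [simp]: "finite (carries p N m n)"
  by (simp add: carries_def)

lemma vp_ibinom_carries:
  fixes m n :: int
  assumes p: "prime p" and n: "0 \<le> n" "n \<le> m" and m: "m \<le> int N"
  shows "vp p (ibinom m n) = enat (card (carries p N m n))"
proof -
  obtain m' n' where mn: "m = int m'" "n = int n'"
    using n by (metis order_trans nonneg_int_cases)
  have "carries p N m n = {k\<in>{1..N}. m' mod p ^ k < n' mod p ^ k}"
    unfolding carries_def mn by (simp flip: of_nat_power zmod_int)
  moreover have "m' choose n' \<noteq> 0"
    using n mn by simp
  ultimately show ?thesis
    using n m mn by (simp add: vp_def ibinom_of_nat multiplicity_of_nat[OF p] kummer_carries[OF p])
qed

lemma vp_ibinom_vanish:
  fixes m n :: int
  assumes "0 \<le> m" "m < n"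
  shows "vp p (ibinom m n) = \<infinity>"
proof -
  obtain m' n' where "m = int m'" "n = int n'"
    using assms by (metis order_trans order_less_imp_le nonneg_int_cases)
  then show ?thesis
    using assms by (simp add: vp_def ibinom_of_nat)
qed

(* The
   non-negativity assumptions make both binomial factors Kummer-computable. *)
lemma vp_ibinom_le_prod:
  fixes m0 n0 m1 n1 m2 n2 :: int
  assumes p: "prime p" and nonneg: "0 \<le> n0" "n0 \<le> m0" "0 \<le> n1" "0 \<le> m1" "0 \<le> n2" "0 \<le> m2"
    and carry: "\<And>k. 1 \<le> k \<Longrightarrow> m0 mod int p ^ k < n0 mod int p ^ k \<Longrightarrow>
      m1 mod int p ^ k < n1 mod int p ^ k \<or> m2 mod int p ^ k < n2 mod int p ^ k"
  shows "vp p (ibinom m0 n0) \<le> vp p (ibinom m1 n1 * ibinom m2 n2)"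
proof (cases "m1 < n1 \<or> m2 < n2")
  case True
  then show ?thesis
    using nonneg by (auto simp: vp_mult[OF p] vp_ibinom_vanish)
next
  case False
  define N where "N = nat (m0 + m1 + m2)"
  have "carries p N m0 n0 \<subseteq> carries p N m1 n1 \<union> carries p N m2 n2"
    using carry by (auto simp: carries_def)
  then have "card (carries p N m0 n0) \<le> card (carries p N m1 n1) + card (carries p N m2 n2)"
    by (meson card_Un_le card_mono finite_UnI finite_carries order_trans)
  moreover have "vp p (ibinom m0 n0) = enat (card (carries p N m0 n0))"
    and "vp p (ibinom m1 n1) = enat (card (carries p N m1 n1))"
    and "vp p (ibinom m2 n2) = enat (card (carries p N m2 n2))"
    using False nonneg by (simp_all add: vp_ibinom_carries[OF p] N_def)
  ultimately show ?thesis
    by (simp add: vp_mult[OF p])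
qed

lemma vp_ibinom_eq:
  fixes m0 n0 m1 n1 :: int
  assumes p: "prime p" and nonneg: "0 \<le> n0" "n0 \<le> m0" "0 \<le> n1" "n1 \<le> m1"
    and carry: "\<And>k. 1 \<le> k \<Longrightarrow>
      m0 mod int p ^ k < n0 mod int p ^ k \<longleftrightarrow> m1 mod int p ^ k < n1 mod int p ^ k"
  shows "vp p (ibinom m0 n0) = vp p (ibinom m1 n1)"
proof -
  define N where "N = nat (m0 + m1)"
  have "carries p N m0 n0 = carries p N m1 n1"
    using carry by (auto simp: carries_def)
  moreover have "vp p (ibinom m0 n0) = enat (card (carries p N m0 n0))"
    and "vp p (ibinom m1 n1) = enat (card (carries p N m1 n1))"
    using nonneg by (simp_all add: vp_ibinom_carries[OF p] N_def)
  ultimately show ?thesis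
    by simp
qed

lemma mod_eq_in_window:
  fixes z q j :: int
  assumes "j * q \<le> z" "z < (j + 1) * q"
  shows "z mod q = z - j * q"
proof -
  have "(z - j * q) mod q = z - j * q"
    using assms by (intro mod_pos_pos_trivial) (simp_all add: algebra_simps)
  then show ?thesis
    by (simp add: mod_diff_eq[symmetric])
qed

lemma mod_linear_residues:
  fixes a b c x y q :: int
  shows "(a * (x mod q) + b * (y mod q) + c) mod q = (a * x + b * y + c) mod q"
  by (intro mod_add_cong mod_mult_cong) simp_all

lemma carry_double_iff:
  fixes q x :: int
  assumes q: "0 < q"
  shows "(2 * x) mod q < x mod q \<longleftrightarrow> q \<le> 2 * (x mod q)"
proof -
  define r where "r = x mod q"
  have r: "0 \<le> r" "r < q"
    using q by (simp_all add: r_def)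
  have "(2 * x) mod q = (2 * r) mod q"
    using mod_linear_residues[of 2 x q 0 x 0] by (simp add: r_def)
  moreover have "(2 * r) mod q = (if 2 * r < q then 2 * r else 2 * r - q)"
    using r mod_eq_in_window[of 0 q "2 * r"] mod_eq_in_window[of 1 q "2 * r"] by auto
  ultimately show ?thesis
    using r by (auto simp flip: r_def)
qed

lemma carry_double_succ_iff:
  fixes q x :: int
  assumes q: "0 < q"
  shows "(2 * x + 1) mod q < x mod q \<longleftrightarrow> q \<le> 2 * (x mod q) + 1 \<and> x mod q + 1 < q"
proof -
  define r where "r = x mod q"
  have r: "0 \<le> r" "r < q"
    using q by (simp_all add: r_def)
  have "(2 * x + 1) mod q = (2 * r + 1) mod q"
    using mod_linear_residues[of 2 x q 0 x 1] by (simp add: r_def)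
  moreover have "(2 * r + 1) mod q = (if 2 * r + 1 < q then 2 * r + 1 else 2 * r + 1 - q)"
    using r mod_eq_in_window[of 0 q "2 * r + 1"] mod_eq_in_window[of 1 q "2 * r + 1"] by auto
  ultimately show ?thesis
    using r by (auto simp flip: r_def)
qed

lemma carry_triple_iff:
  fixes q x :: int
  assumes q: "0 < q" and gap: "3 * (x mod q) + 1 \<le> q \<or> 2 * q \<le> 3 * (x mod q)"
  shows "(3 * x) mod q < x mod q \<longleftrightarrow> q \<le> 2 * (x mod q)"
proof -
  define r where "r = x mod q"
  have r: "0 \<le> r" "r < q"
    using q by (simp_all add: r_def)
  have "(3 * x) mod q = (3 * r) mod q"
    using mod_linear_residues[of 3 x q 0 x 0] by (simp add: r_def)
  moreover have "(3 * r) mod q = (if 3 * r < q then 3 * r else 3 * r - 2 * q)"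
    using r gap mod_eq_in_window[of 0 q "3 * r"] mod_eq_in_window[of 2 q "3 * r"]
    by (auto simp flip: r_def)
  ultimately show ?thesis
    using r gap by (auto simp flip: r_def)
qed

lemma carry_triple_succ2_iff:
  fixes q x :: int
  assumes q: "0 < q" and gap: "3 * (x mod q) + 3 \<le> q \<or> 2 * q \<le> 3 * (x mod q)"
  shows "(3 * x + 2) mod q < x mod q \<longleftrightarrow> q \<le> 2 * (x mod q) + 1 \<and> x mod q + 1 < q"
proof -
  define r where "r = x mod q"
  have r: "0 \<le> r" "r < q"
    using q by (simp_all add: r_def)
  have "(3 * x + 2) mod q = (3 * r + 2) mod q"
    using mod_linear_residues[of 3 x q 0 x 2] by (simp add: r_def)
  moreover have "(3 * r + 2) mod q = (if 3 * r + 2 < q then 3 * r + 2 else 3 * r + 2 - 2 * q)"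
    using r gap mod_eq_in_window[of 0 q "3 * r + 2"] mod_eq_in_window[of 2 q "3 * r + 2"]
    by (auto simp flip: r_def)
  ultimately show ?thesis
    using r gap by (auto simp flip: r_def)
qed

lemma carry_triple_minus:
  fixes q x y t :: int
  assumes q: "0 < q" and upper: "2 * q \<le> 3 * (x mod q)" and t: "0 \<le> t" "t \<le> 1"
  shows "y mod q < x mod q \<or> (3 * x - t - y) mod q < x mod q"
proof (cases "y mod q < x mod q")
  case True
  then show ?thesis ..
next
  case False
  define r s where "r = x mod q" and "s = y mod q"
  have rs: "r \<le> s" "s < q"
    using False q by (simp_all add: r_def s_def)
  have "(3 * x - t - y) mod q = (3 * r - t - s) mod q"
    using mod_linear_residues[of 3 x q "-1" y "-t"] by (simp add: r_def s_def algebra_simps)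
  also have "\<dots> = 3 * r - t - s - q"
    using mod_eq_in_window[of 1 q "3 * r - t - s"] rs upper t by (simp add: r_def)
  finally show ?thesis
    using rs t by (simp flip: r_def)
qed

lemma carry_triple_plus_succ:
  fixes q x y :: int
  assumes q: "0 < q" and upper: "2 * q \<le> 3 * (x mod q)" and top: "x mod q + 1 < q"
  shows "y mod q < x mod q \<or> (3 * x + 1 - y) mod q < (x + 1) mod q"
proof (cases "y mod q < x mod q")
  case True
  then show ?thesis ..
next
  case False
  define r s where "r = x mod q" and "s = y mod q"
  have rs: "r \<le> s" "s < q"
    using False q by (simp_all add: r_def s_def)
  have "(x + 1) mod q = (r + 1) mod q"
    using mod_linear_residues[of 1 x q 0 y 1] by (simp add: r_def)
  also have "\<dots> = r + 1"
    using top q by (simp add: r_def)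
  finally have succ: "(x + 1) mod q = r + 1" .
  have "(3 * x + 1 - y) mod q = (3 * r + 1 - s) mod q"
    using mod_linear_residues[of 3 x q "-1" y 1] by (simp add: r_def s_def algebra_simps)
  also have "\<dots> = 3 * r + 1 - s - q"
    using mod_eq_in_window[of 1 q "3 * r + 1 - s"] rs upper top by (simp add: r_def)
  finally show ?thesis
    using rs top succ by (simp flip: r_def)
qed

lemma carry_triple_minus2_pred:
  fixes q x y :: int
  assumes q: "0 < q" and upper: "2 * q + 1 \<le> 3 * (x mod q)"
  shows "y mod q < (x - 1) mod q \<or> (3 * x - 2 - y) mod q < x mod q"
proof -
  define r s where "r = x mod q" and "s = y mod q"
  have r: "1 \<le> r" "r < q"
    using q upper by (simp_all add: r_def)
  have "(x - 1) mod q = (r - 1) mod q"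
    using mod_linear_residues[of 1 x q 0 y "-1"] by (simp add: r_def)
  also have "\<dots> = r - 1"
    using r by simp
  finally have pred: "(x - 1) mod q = r - 1" .
  show ?thesis
  proof (cases "y mod q < (x - 1) mod q")
    case True
    then show ?thesis ..
  next
    case False
    then have rs: "r - 1 \<le> s" "s < q"
      using q pred by (simp_all add: s_def)
    have "(3 * x - 2 - y) mod q = (3 * r - 2 - s) mod q"
      using mod_linear_residues[of 3 x q "-1" y "-2"] by (simp add: r_def s_def algebra_simps)
    also have "\<dots> = 3 * r - 2 - s - q"
      using mod_eq_in_window[of 1 q "3 * r - 2 - s"] rs upper by (simp add: r_def)
    finally show ?thesis
      using rs r by (simp flip: r_def)
  qed
qed

lemma prime_power_pos: "prime p \<Longrightarrow> 0 < int p ^ k"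
  by (simp add: prime_gt_0_nat)

lemma vp_central_eq_triple:
  fixes x :: int
  assumes p: "prime p" and x: "0 \<le> x"
    and gap: "\<And>k. 1 \<le> k \<Longrightarrow>
      3 * (x mod int p ^ k) + 1 \<le> int p ^ k \<or> 2 * int p ^ k \<le> 3 * (x mod int p ^ k)"
  shows "vp p (ibinom (2 * x) x) = vp p (ibinom (3 * x) x)"
proof (rule vp_ibinom_eq[OF p])
  fix k :: nat
  assume "1 \<le> k"
  show "(2 * x) mod int p ^ k < x mod int p ^ k \<longleftrightarrow> (3 * x) mod int p ^ k < x mod int p ^ k"
    using carry_double_iff carry_triple_iff gap[OF \<open>1 \<le> k\<close>] prime_power_pos[OF p] by simp
qed (use x in simp_all)

lemma vp_central_succ_eq_triple_succ2:
  fixes x :: int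
  assumes p: "prime p" and x: "0 \<le> x"
    and gap: "\<And>k. 1 \<le> k \<Longrightarrow>
      3 * (x mod int p ^ k) + 3 \<le> int p ^ k \<or> 2 * int p ^ k \<le> 3 * (x mod int p ^ k)"
  shows "vp p (ibinom (2 * x + 1) x) = vp p (ibinom (3 * x + 2) x)"
proof (rule vp_ibinom_eq[OF p])
  fix k :: nat
  assume "1 \<le> k"
  show "(2 * x + 1) mod int p ^ k < x mod int p ^ k \<longleftrightarrow> (3 * x + 2) mod int p ^ k < x mod int p ^ k"
    using carry_double_succ_iff carry_triple_succ2_iff gap[OF \<open>1 \<le> k\<close>] prime_power_pos[OF p] by simp
qed (use x in simp_all)

lemma vp_central_le_prod_triple_minus:
  fixes x a t :: int
  assumes p: "prime p" and x: "0 \<le> x" and a: "0 \<le> a" "a \<le> 2 * x" and t: "0 \<le> t" "t \<le> 1"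
    and gap: "\<And>k. 1 \<le> k \<Longrightarrow>
      3 * (x mod int p ^ k) + 1 \<le> int p ^ k \<or> 2 * int p ^ k \<le> 3 * (x mod int p ^ k)"
  shows "vp p (ibinom (2 * x) x) \<le> vp p (ibinom a x * ibinom (3 * x - t - a) x)"
proof (cases "x = 0")
  case True
  then show ?thesis
    using a by (simp add: ibinom_def)
next
  case False
  show ?thesis
  proof (rule vp_ibinom_le_prod[OF p])
    fix k :: nat
    assume k: "1 \<le> k" and "(2 * x) mod int p ^ k < x mod int p ^ k"
    then have "2 * int p ^ k \<le> 3 * (x mod int p ^ k)"
      using gap[OF k] carry_double_iff prime_power_pos[OF p] by fastforce
    then show "a mod int p ^ k < x mod int p ^ k \<or> (3 * x - t - a) mod int p ^ k < x mod int p ^ k"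
      using carry_triple_minus prime_power_pos[OF p] t by blast
  qed (use False x a t in simp_all)
qed

lemma vp_central_succ_le_prod_triple_plus:
  fixes x a :: int
  assumes p: "prime p" and x: "0 \<le> x" and a: "0 \<le> a" "a \<le> 2 * x"
    and gap: "\<And>k. 1 \<le> k \<Longrightarrow>
      3 * (x mod int p ^ k) + 3 \<le> int p ^ k \<or> 2 * int p ^ k \<le> 3 * (x mod int p ^ k)"
  shows "vp p (ibinom (2 * x + 1) x) \<le> vp p (ibinom a x * ibinom (3 * x + 1 - a) (x + 1))"
proof (rule vp_ibinom_le_prod[OF p])
  fix k :: nat
  assume k: "1 \<le> k" and "(2 * x + 1) mod int p ^ k < x mod int p ^ k"
  then have "2 * int p ^ k \<le> 3 * (x mod int p ^ k)" and "x mod int p ^ k + 1 < int p ^ k"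
    using gap[OF k] carry_double_succ_iff prime_power_pos[OF p] by fastforce+
  then show "a mod int p ^ k < x mod int p ^ k \<or> (3 * x + 1 - a) mod int p ^ k < (x + 1) mod int p ^ k"
    using carry_triple_plus_succ prime_power_pos[OF p] by blast
qed (use x a in simp_all)

(* Statement (2d).  For x = 1, a = 2 the second factor has a negative upper
   argument; there the gap condition forces p > 2 and both valuations are 0. *)
lemma vp_central_le_prod_triple_minus2:
  fixes x a :: int
  assumes p: "prime p" and x: "0 \<le> x" and a: "0 \<le> a" "a \<le> 2 * x"
    and gap: "\<And>k. 1 \<le> k \<Longrightarrow>
      3 * (x mod int p ^ k) + 1 \<le> int p ^ k \<or> 2 * int p ^ k + 1 \<le> 3 * (x mod int p ^ k)"
  shows "vp p (ibinom (2 * x) x) \<le> vp p (ibinom a (x - 1) * ibinom (3 * x - 2 - a) x)"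
proof -
  consider "x = 0" | "x = 1" "a = 2" | "1 \<le> x" "a + 2 \<le> 3 * x"
    using x a by linarith
  then show ?thesis
  proof cases
    case 1
    then show ?thesis
      by (simp add: ibinom_def vp_def)
  next
    case 2
    have "p \<noteq> 2"
      using gap[of 1] 2 by auto
    then have "\<not> p dvd 2"
      using primes_dvd_imp_eq[OF p two_is_prime_nat] by auto
    then have "multiplicity (int p) 2 = 0"
      by (intro not_dvd_imp_multiplicity_0) (metis int_dvd_int_iff of_nat_numeral)
    moreover have "ibinom a (x - 1) * ibinom (3 * x - 2 - a) x = -1" and "ibinom (2 * x) x = 2"
      using 2 by (simp_all add: ibinom_def)
    ultimately show ?thesis
      by (simp add: vp_def multiplicity_unit_right)
  next
    case 3
    show ?thesis
    proof (rule vp_ibinom_le_prod[OF p])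
      fix k :: nat
      assume k: "1 \<le> k" and "(2 * x) mod int p ^ k < x mod int p ^ k"
      then have "2 * int p ^ k + 1 \<le> 3 * (x mod int p ^ k)"
        using gap[OF k] carry_double_iff prime_power_pos[OF p] by fastforce
      then show "a mod int p ^ k < (x - 1) mod int p ^ k \<or> (3 * x - 2 - a) mod int p ^ k < x mod int p ^ k"
        using carry_triple_minus2_pred prime_power_pos[OF p] by blast
    qed (use 3 a in simp_all)
  qed
qed

lemma mod_triple_shift:
  fixes x c Q :: int
  assumes Q: "0 < Q" and c: "0 \<le> c" "c < 3"
  shows "(3 * x + c) mod (3 * Q) = 3 * (x mod Q) + c"
proof -
  have "(3 * x + c) mod (3 * Q) = (3 * (x mod Q) + c) mod (3 * Q)"
    by (rule mod_add_cong) (simp_all add: mod_mult_mult1)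
  also have "\<dots> = 3 * (x mod Q) + c"
    using c pos_mod_bound[OF Q, of x] pos_mod_sign[OF Q, of x] by (intro mod_pos_pos_trivial) linarith+
  finally show ?thesis .
qed

lemma D3_residue_gap_step:
  fixes x c :: int
  assumes c: "c = 0 \<or> c = 2" and k: "1 \<le> k"
    and IH: "\<And>j. 1 \<le> j \<Longrightarrow> 3 * (x mod 3 ^ j) + 3 \<le> 3 ^ j \<or> 2 * 3 ^ j \<le> 3 * (x mod 3 ^ j)"
  shows "3 * ((3 * x + c) mod 3 ^ k) + 3 \<le> 3 ^ k \<or> 2 * 3 ^ k \<le> 3 * ((3 * x + c) mod 3 ^ k)"
proof -
  obtain j where j: "k = Suc j"
    using k by (cases k) auto
  define q :: int where "q = 3 ^ j"
  have q: "1 \<le> q"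
    by (simp add: q_def)
  have shift: "(3 * x + c) mod 3 ^ k = 3 * (x mod q) + c"
    using mod_triple_shift[of q c x] c q by (auto simp: j q_def)
  have pow: "3 ^ k = 3 * q"
    by (simp add: j q_def)
  show ?thesis
  proof (cases "j = 0")
    case True
    then show ?thesis
      unfolding shift unfolding pow using c by (auto simp: q_def)
  next
    case False
    then have "3 * (x mod q) + 3 \<le> q \<or> 2 * q \<le> 3 * (x mod q)"
      using IH[of j] by (simp add: q_def)
    then show ?thesis
      unfolding shift unfolding pow using c by auto
  qed
qed

(* Every d in D_3 has base-3 digits 0 and 2 only, so for k >= 1 each residue
   d mod 3^k is at most 3^(k-1) - 1 or at least 2 * 3^(k-1). *)
lemma D3_residue_gap:
  assumes "d \<in> D3" and "1 \<le> k"
  shows "3 * (int d mod 3 ^ k) + 3 \<le> 3 ^ k \<or> 2 * 3 ^ k \<le> 3 * (int d mod 3 ^ k)"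
  using assms
proof (induction d arbitrary: k rule: D3.induct)
  case D3_zero
  then show ?case
    using power_increasing[of 1 k "3::int"] by simp
next
  case (D3_mult d)
  then show ?case
    using D3_residue_gap_step[of 0 k "int d"] by simp
next
  case (D3_plus2 d)
  then show ?case
    using D3_residue_gap_step[of 2 k "int d"] by (simp add: ac_simps)
qed

lemma pip_bound: "3 * pip p \<le> int p - 1"
  unfolding pip_def by linarith

(* Every d in D_p (p >= 5) is congruent mod p^k to some u with 3|u| < p^k:
   the balanced base-p digits of d are at most pi_p in absolute value. *)
lemma Dgen_balanced_representative:
  assumes "d \<in> Dgen p" and p: "0 < p"
  shows "\<exists>u. int d mod int p ^ k = u mod int p ^ k \<and> 3 * \<bar>u\<bar> < int p ^ k"
  using assms(1)
proof (induction d arbitrary: k rule: Dgen.induct)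
  case (Dgen_base d)
  show ?case
  proof (cases k)
    case 0
    then show ?thesis
      by (intro exI[of _ 0]) simp
  next
    case (Suc j)
    have "3 * int d < int p"
      using Dgen_base pip_bound[of p] by linarith
    also have "int p \<le> int p ^ k"
      using p Suc by (simp add: self_le_power)
    finally show ?thesis
      by auto
  qed
next
  case (Dgen_step d e)
  show ?case
  proof (cases k)
    case 0
    then show ?thesis
      by (intro exI[of _ 0]) simp
  next
    case (Suc j)
    obtain u where u: "int d mod int p ^ j = u mod int p ^ j" "3 * \<bar>u\<bar> < int p ^ j"
      using Dgen_step.IH by blast
    define t where "t = int e - int p * int d"
    have "\<bar>t\<bar> \<le> pip p"
      using Dgen_step.hyps unfolding t_def abs_le_iff by linarith
    then have t: "3 * \<bar>t\<bar> \<le> int p - 1"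
      using pip_bound[of p] by linarith
    have "(int p * int d) mod (int p * int p ^ j) = (int p * u) mod (int p * int p ^ j)"
      using u(1) by (simp add: mod_mult_mult1)
    then have "(int p * int d + t) mod int p ^ k = (int p * u + t) mod int p ^ k"
      unfolding Suc by (intro mod_add_cong) simp_all
    then have "int e mod int p ^ k = (int p * u + t) mod int p ^ k"
      by (simp add: t_def)
    moreover have "3 * \<bar>int p * u + t\<bar> < int p ^ k"
    proof -
      have "3 * \<bar>int p * u + t\<bar> \<le> int p * (3 * \<bar>u\<bar>) + 3 * \<bar>t\<bar>"
        using abs_triangle_ineq[of "int p * u" t] by (simp add: abs_mult)
      also have "\<dots> \<le> int p * (int p ^ j - 1) + (int p - 1)"
        using u(2) t by (intro add_mono mult_left_mono) simp_all
      also have "\<dots> < int p ^ k"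
        by (simp add: Suc algebra_simps)
      finally show ?thesis .
    qed
    ultimately show ?thesis
      by blast
  qed
qed

lemma Dgen_residue_gap:
  assumes "d \<in> Dgen p" and p: "0 < p"
  shows "3 * (int d mod int p ^ k) + 1 \<le> int p ^ k \<or> 2 * int p ^ k + 1 \<le> 3 * (int d mod int p ^ k)"
proof -
  define q where "q = int p ^ k"
  obtain u where u: "int d mod q = u mod q" "3 * \<bar>u\<bar> < q"
    using Dgen_balanced_representative[OF assms] unfolding q_def by blast
  show ?thesis
  proof (cases "0 \<le> u")
    case True
    then have "u mod q = u"
      using u(2) by (intro mod_pos_pos_trivial) simp_all
    then show ?thesis
      using u True unfolding q_def[symmetric] by simp
  next
    case False
    then have "u mod q = u - (-1) * q"
      using u(2) by (intro mod_eq_in_window) simp_all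
    then show ?thesis
      using u False unfolding q_def[symmetric] by simp
  qed
qed

theorem theorem1p9:
  fixes p d :: nat
  assumes "prime p" and "p \<ge> 3" and "d \<in> Dp p"
  shows "(p = 3 \<longrightarrow>
            vp 3 (ibinom (2*int d) (int d)) = vp 3 (ibinom (3*int d) (int d))
          \<and> vp 3 (ibinom (2*int d + 1) (int d)) = vp 3 (ibinom (3*int d + 2) (int d))
          \<and> (\<forall>a::int. 0 \<le> a \<and> a \<le> 2*int d \<longrightarrow>
                vp 3 (ibinom a (int d) * ibinom (3*int d - a) (int d)) \<ge> vp 3 (ibinom (2*int d) (int d))
              \<and> vp 3 (ibinom a (int d) * ibinom (3*int d - 1 - a) (int d)) \<ge> vp 3 (ibinom (2*int d) (int d))
              \<and> vp 3 (ibinom a (int d) * ibinom (3*int d + 1 - a) (int d + 1)) \<ge> vp 3 (ibinom (2*int d + 1) (int d))))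
       \<and> (p \<ge> 5 \<longrightarrow>
            vp p (ibinom (2*int d) (int d)) = vp p (ibinom (3*int d) (int d))
          \<and> (\<forall>a::int. 0 \<le> a \<and> a \<le> 2*int d \<longrightarrow>
                vp p (ibinom a (int d) * ibinom (3*int d - a) (int d)) \<ge> vp p (ibinom (2*int d) (int d))
              \<and> vp p (ibinom a (int d) * ibinom (3*int d - 1 - a) (int d)) \<ge> vp p (ibinom (2*int d) (int d))
              \<and> vp p (ibinom a (int d - 1) * ibinom (3*int d - 2 - a) (int d)) \<ge> vp p (ibinom (2*int d) (int d))))"
proof -
  note p = \<open>prime p\<close>
  have x: "0 \<le> int d"
    by simp
  let ?r = "\<lambda>k. int d mod int p ^ k"
  have gap3: "3 * ?r k + 3 \<le> int p ^ k \<or> 2 * int p ^ k \<le> 3 * ?r k" if "p = 3" "1 \<le> k" for k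
    using D3_residue_gap[of d k] assms(3) that by (simp add: Dp_def)
  have gap5: "3 * ?r k + 1 \<le> int p ^ k \<or> 2 * int p ^ k + 1 \<le> 3 * ?r k" if "p \<ge> 5" for k
    using Dgen_residue_gap[of d p k] assms(3) that by (simp add: Dp_def)
  have "p \<noteq> 4"
    using p prime_product[of 2 2] by auto
  then have gap: "3 * ?r k + 1 \<le> int p ^ k \<or> 2 * int p ^ k \<le> 3 * ?r k" if "1 \<le> k" for k
    using gap3[OF _ that] gap5[of k] assms(2) by fastforce
  have a: "vp p (ibinom (2*int d) (int d)) = vp p (ibinom (3*int d) (int d))"
    by (rule vp_central_eq_triple[OF p x gap])
  have cd: "vp p (ibinom (2*int d) (int d)) \<le> vp p (ibinom a (int d) * ibinom (3*int d - t - a) (int d))"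
    if "0 \<le> a" "a \<le> 2*int d" "0 \<le> t" "t \<le> 1" for a t
    by (rule vp_central_le_prod_triple_minus[OF p x that gap])
  have b: "vp p (ibinom (2*int d + 1) (int d)) = vp p (ibinom (3*int d + 2) (int d))" if "p = 3"
    by (rule vp_central_succ_eq_triple_succ2[OF p x gap3[OF that]])
  have e: "vp p (ibinom (2*int d + 1) (int d)) \<le> vp p (ibinom a (int d) * ibinom (3*int d + 1 - a) (int d + 1))"
    if "p = 3" "0 \<le> a" "a \<le> 2*int d" for a
    by (rule vp_central_succ_le_prod_triple_plus[OF p x that(2,3) gap3[OF that(1)]])
  have f: "vp p (ibinom (2*int d) (int d)) \<le> vp p (ibinom a (int d - 1) * ibinom (3*int d - 2 - a) (int d))"
    if "p \<ge> 5" "0 \<le> a" "a \<le> 2*int d" for a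
    by (rule vp_central_le_prod_triple_minus2[OF p x that(2,3) gap5[OF that(1)]])
  show ?thesis
    using a b e f cd[where t = 0] cd[where t = 1] by auto
qed

end
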